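(* Let $k(x)$ be a polynomial with $k(x)=k(-x)=\overline{k(x)}$ for real $x$ (i.e. an even polynomial with real coefficients). For $\xi>0$ let $S_\xi$ be the operator on $L^2(0,\xi)$ given by $(S_\xi f)(x)=f(x)+\int_0^\xi f(t)k(x-t)\,dt$, and for those $\xi>0$ at which $S_\xi$ is invertible put $h_2(\xi)=(S_\xi^{-1}1)(\xi)$, where $S_\xi^{-1}1$ (a polynomial in $x$) is evaluated at $x=\xi$; equivalently $h_2(\xi)=1+\int_0^\xi\Gamma_\xi(\xi,t)\,dt$, where $\Gamma_\xi$ is the resolvent kernel, $S_\xi^{-1}f=f+\int_0^\xi\Gamma_\xi(x,t)f(t)\,dt$. Then there is a rational function $R$ with $h_2(\xi)=R(\xi)$ for all such $\xi$. Consequently the function $Q(\xi)=\frac{1}{2h_2(\xi)^2}$ is rational. *)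

theory Defs
  imports "HOL-Analysis.Analysis" "HOL-Computational_Algebra.Polynomial"
begin

definition L2on :: "real \<Rightarrow> (real \<Rightarrow> complex) \<Rightarrow> bool" where
  "L2on \<xi> f \<longleftrightarrow> f \<in> borel_measurable (lebesgue_on {0..\<xi>}) \<and>
     integrable (lebesgue_on {0..\<xi>}) (\<lambda>x. (norm (f x))^2)"

definition Sop :: "complex poly \<Rightarrow> real \<Rightarrow> (real \<Rightarrow> complex) \<Rightarrow> real \<Rightarrow> complex" where
  "Sop k \<xi> f x = f x + (LINT t|lebesgue_on {0..\<xi>}. f t * poly k (of_real (x - t)))"

text \<open>S_xi is invertible as an operator on L^2(0,xi): bijective on a.e.-classes
  (a bounded inverse is then automatic by the open mapping theorem).\<close>
definition S_invertible :: "complex poly \<Rightarrow> real \<Rightarrow> bool" where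
  "S_invertible k \<xi> \<longleftrightarrow>
     (\<forall>g. L2on \<xi> g \<longrightarrow> (\<exists>f. L2on \<xi> f \<and> (AE x in lebesgue_on {0..\<xi>}. Sop k \<xi> f x = g x))) \<and>
     (\<forall>f1 f2. L2on \<xi> f1 \<and> L2on \<xi> f2 \<and>
        (AE x in lebesgue_on {0..\<xi>}. Sop k \<xi> f1 x = Sop k \<xi> f2 x) \<longrightarrow>
        (AE x in lebesgue_on {0..\<xi>}. f1 x = f2 x))"

definition h2 :: "complex poly \<Rightarrow> real \<Rightarrow> complex" where
  "h2 k \<xi> = (THE c. \<exists>p :: complex poly.
      (AE x in lebesgue_on {0..\<xi>}. Sop k \<xi> (\<lambda>t. poly p (of_real t)) x = 1) \<and>
      c = poly p (of_real \<xi>))"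

end

(* The kernel k(x - t) has finite rank: by the binomial theorem
   k(x - t) = sum_{i <= n} x^i g_i(t) with n = deg k.  Hence S_xi maps polynomials of degree <= n
   into themselves and acts on their coefficient vectors by the matrix I + G(xi), where
   G_im(xi) = int_0^xi t^m g_i(t) dt is a polynomial in xi.  Since a polynomial vanishing almost
   everywhere on (0, xi) is zero, invertibility of S_xi makes it injective on polynomials, so
   det (I + G(xi)) <> 0, and by Cramer's rule the solution of S_xi p = 1 has coefficients
   adj (I + G(xi))_m0 / det (I + G(xi)).  Evaluating p at xi exhibits h_2 as a quotient of two
   fixed polynomials, and 1 / (2 h_2^2) is then rational as well. *)

theory Submission
  imports Defs "Jordan_Normal_Form.Determinant"
begin

unbundle no vec_syntax

definition poly_of_vec :: "'a::comm_semiring_1 vec \<Rightarrow> 'a poly" where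
  "poly_of_vec v = (\<Sum>i<dim_vec v. monom (v $ i) i)"

lemma poly_poly_of_vec: "poly (poly_of_vec v) x = (\<Sum>i<dim_vec v. v $ i * x ^ i)"
  by (simp add: poly_of_vec_def poly_sum poly_monom)

lemma coeff_poly_of_vec: "i < dim_vec v \<Longrightarrow> coeff (poly_of_vec v) i = v $ i"
  by (simp add: poly_of_vec_def coeff_sum coeff_monom)

lemma poly_of_vec_zero_vec [simp]: "poly_of_vec (0\<^sub>v n) = 0"
  by (simp add: poly_of_vec_def)

lemma poly_of_vec_eq_0_iff: "poly_of_vec v = 0 \<longleftrightarrow> v = 0\<^sub>v (dim_vec v)"
proof
  assume "poly_of_vec v = 0"
  then show "v = 0\<^sub>v (dim_vec v)"
    by (intro eq_vecI) (use coeff_poly_of_vec[of _ v] in auto)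
qed (metis poly_of_vec_zero_vec)

lemma poly_of_vec_unit_vec_0:
  assumes "0 < n"
  shows "poly_of_vec (unit_vec n 0 :: 'a::comm_semiring_1 vec) = 1"
proof -
  have "poly_of_vec (unit_vec n 0 :: 'a vec) = (\<Sum>i<n. if i = 0 then 1 else 0)"
    unfolding poly_of_vec_def by (intro sum.cong) auto
  then show ?thesis
    using assms by simp
qed

definition diff_coeff :: "'a::comm_ring_1 poly \<Rightarrow> nat \<Rightarrow> 'a poly" where
  "diff_coeff k i = (\<Sum>j\<le>degree k. Polynomial.smult (coeff k j * of_nat (j choose i)) ([:0, -1:] ^ (j - i)))"

lemma poly_diff_expansion:
  fixes k :: "'a::comm_ring_1 poly"
  shows "poly k (x - t) = (\<Sum>i\<le>degree k. x ^ i * poly (diff_coeff k i) t)"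
proof -
  let ?n = "degree k"
  have "poly k (x - t) = (\<Sum>j\<le>?n. coeff k j * (x + - t) ^ j)"
    by (simp add: poly_altdef)
  also have "\<dots> = (\<Sum>j\<le>?n. \<Sum>i\<le>?n. coeff k j * (of_nat (j choose i) * x ^ i * (- t) ^ (j - i)))"
  proof (intro sum.cong refl)
    fix j assume "j \<in> {..?n}"
    then have "(\<Sum>i\<le>j. of_nat (j choose i) * x ^ i * (- t) ^ (j - i))
        = (\<Sum>i\<le>?n. of_nat (j choose i) * x ^ i * (- t) ^ (j - i))"
      by (intro sum.mono_neutral_left) (simp_all add: binomial_eq_0 not_le)
    then show "coeff k j * (x + - t) ^ j
        = (\<Sum>i\<le>?n. coeff k j * (of_nat (j choose i) * x ^ i * (- t) ^ (j - i)))"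
      unfolding binomial_ring by (simp add: sum_distrib_left)
  qed
  also have "\<dots> = (\<Sum>i\<le>?n. \<Sum>j\<le>?n. x ^ i * (coeff k j * of_nat (j choose i) * (- t) ^ (j - i)))"
    by (subst sum.swap) (simp add: ac_simps)
  also have "\<dots> = (\<Sum>i\<le>?n. x ^ i * poly (diff_coeff k i) t)"
    by (simp add: diff_coeff_def poly_sum poly_power sum_distrib_left)
  finally show ?thesis .
qed

definition poly_antideriv :: "'a::field_char_0 poly \<Rightarrow> 'a poly" where
  "poly_antideriv p = (\<Sum>m\<le>degree p. monom (coeff p m / of_nat (Suc m)) (Suc m))"

lemma pderiv_sum: "pderiv (\<Sum>x\<in>A. f x) = (\<Sum>x\<in>A. pderiv (f x))"
  by (induction A rule: infinite_finite_induct) (simp_all add: pderiv_add)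

lemma pderiv_poly_antideriv: "pderiv (poly_antideriv p) = p"
proof -
  have "pderiv (poly_antideriv p) = (\<Sum>m\<le>degree p. pderiv (monom (coeff p m / of_nat (Suc m)) (Suc m)))"
    unfolding poly_antideriv_def by (rule pderiv_sum)
  also have "\<dots> = (\<Sum>m\<le>degree p. monom (coeff p m) m)"
    by (simp add: pderiv_monom del: of_nat_Suc)
  finally show ?thesis
    by (simp add: poly_as_sum_of_monoms)
qed

lemma poly_antideriv_at_0 [simp]: "poly (poly_antideriv p) 0 = 0"
  by (simp add: poly_antideriv_def poly_sum poly_monom)

lemma
  fixes p :: "complex poly"
  assumes "0 \<le> b"
  shows integrable_poly_lebesgue_on: "integrable (lebesgue_on {0..b}) (\<lambda>t. poly p (of_real t))"
    and integral_poly_lebesgue_on: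
      "(LINT t|lebesgue_on {0..b}. poly p (of_real t)) = poly (poly_antideriv p) (of_real b)"
proof -
  show integrable: "integrable (lebesgue_on {0..b}) (\<lambda>t. poly p (of_real t))"
    by (intro continuous_imp_integrable_real continuous_intros)
  have "((\<lambda>t. poly p (of_real t)) has_integral
      poly (poly_antideriv p) (of_real b) - poly (poly_antideriv p) (of_real 0)) {0..b}"
  proof (rule fundamental_theorem_of_calculus[OF assms])
    fix x assume "x \<in> {0..b}"
    show "((\<lambda>t. poly (poly_antideriv p) (of_real t)) has_vector_derivative poly p (of_real x))
        (at x within {0..b})"
      using has_vector_derivative_real_field[OF poly_DERIV[of "poly_antideriv p" "of_real x"]]
      by (simp add: pderiv_poly_antideriv)
  qed
  then show "(LINT t|lebesgue_on {0..b}. poly p (of_real t)) = poly (poly_antideriv p) (of_real b)"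
    using lebesgue_integral_eq_integral[OF integrable] by (simp add: integral_unique)
qed

definition S_matrix :: "complex poly \<Rightarrow> complex poly mat" where
  "S_matrix k = mat (Suc (degree k)) (Suc (degree k))
     (\<lambda>(i, m). of_bool (i = m) + poly_antideriv (monom 1 m * diff_coeff k i))"

lemma S_matrix_carrier: "S_matrix k \<in> carrier_mat (Suc (degree k)) (Suc (degree k))"
  by (simp add: S_matrix_def)

lemma integral_poly_of_vec_mult_kernel:
  fixes k :: "complex poly"
  assumes "0 \<le> \<xi>" and v: "v \<in> carrier_vec (Suc (degree k))"
  defines "N \<equiv> Suc (degree k)"
  shows "(LINT t|lebesgue_on {0..\<xi>}. poly (poly_of_vec v) (of_real t) * poly k (of_real (x - t))) =
    (\<Sum>i<N. \<Sum>m<N. (of_real x ^ i * v $ m) *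
       poly (poly_antideriv (monom 1 m * diff_coeff k i)) (of_real \<xi>))"
proof -
  let ?g = "\<lambda>i m. monom 1 m * diff_coeff k i"
  have integrand: "poly (poly_of_vec v) (of_real t) * poly k (of_real (x - t)) =
      (\<Sum>i<N. \<Sum>m<N. (of_real x ^ i * v $ m) * poly (?g i m) (of_real t))" for t
  proof -
    have "poly (poly_of_vec v) (of_real t) * poly k (of_real (x - t)) =
        (\<Sum>m<N. \<Sum>i<N. (v $ m * of_real t ^ m) * (of_real x ^ i * poly (diff_coeff k i) (of_real t)))"
      using v by (simp add: N_def poly_poly_of_vec poly_diff_expansion lessThan_Suc_atMost
          sum_product del: sum.lessThan_Suc)
    also have "\<dots> = (\<Sum>i<N. \<Sum>m<N. (of_real x ^ i * v $ m) * poly (?g i m) (of_real t))"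
      by (subst sum.swap) (simp add: poly_monom mult_ac del: sum.lessThan_Suc)
    finally show ?thesis .
  qed
  have "integrable (lebesgue_on {0..\<xi>}) (\<lambda>t. (of_real x ^ i * v $ m) * poly (?g i m) (of_real t))"
    for i m
    using assms(1) by (intro integrable_mult_right integrable_poly_lebesgue_on)
  then show ?thesis
    unfolding integrand using assms(1)
    by (simp add: integral_poly_lebesgue_on Bochner_Integration.integral_sum
        Bochner_Integration.integrable_sum del: sum.lessThan_Suc poly_mult)
qed

lemma Sop_poly_of_vec:
  fixes k :: "complex poly"
  assumes "0 \<le> \<xi>" and v: "v \<in> carrier_vec (Suc (degree k))"
  shows "Sop k \<xi> (\<lambda>t. poly (poly_of_vec v) (of_real t)) x =
    poly (poly_of_vec (map_mat (\<lambda>q. poly q (of_real \<xi>)) (S_matrix k) *\<^sub>v v)) (of_real x)"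
proof -
  let ?N = "Suc (degree k)" and ?X = "complex_of_real x"
  let ?G = "\<lambda>i m. poly (poly_antideriv (monom 1 m * diff_coeff k i)) (of_real \<xi>)"
  have entry: "(map_mat (\<lambda>q. poly q (of_real \<xi>)) (S_matrix k) *\<^sub>v v) $ i =
      v $ i + (\<Sum>m<?N. ?G i m * v $ m)" if "i < ?N" for i
    using that v
    by (simp add: S_matrix_def scalar_prod_def atLeast0LessThan distrib_right sum.distrib
        of_bool_def if_distrib[of "\<lambda>q. poly q _"] if_distrib[of "\<lambda>c. c * _"]
        cong: if_cong del: sum.lessThan_Suc)
  have dim: "dim_vec (map_mat (\<lambda>q. poly q (of_real \<xi>)) (S_matrix k) *\<^sub>v v) = ?N"
    by (simp add: S_matrix_def)
  have "poly (poly_of_vec (map_mat (\<lambda>q. poly q (of_real \<xi>)) (S_matrix k) *\<^sub>v v)) ?X =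
      (\<Sum>i<?N. (v $ i + (\<Sum>m<?N. ?G i m * v $ m)) * ?X ^ i)"
    unfolding poly_poly_of_vec dim by (intro sum.cong refl) (simp add: entry del: index_mult_mat_vec)
  also have "\<dots> = Sop k \<xi> (\<lambda>t. poly (poly_of_vec v) (of_real t)) x"
    unfolding Sop_def integral_poly_of_vec_mult_kernel[OF assms] using v
    by (simp add: poly_poly_of_vec algebra_simps sum.distrib sum_distrib_left
        del: sum.lessThan_Suc)
  finally show ?thesis ..
qed

interpretation poly_eval: comm_ring_hom "\<lambda>q. poly q a"
  by unfold_locales auto

lemma L2on_poly: "0 \<le> \<xi> \<Longrightarrow> L2on \<xi> (\<lambda>t. poly p (of_real t))"
  unfolding L2on_def
  by (intro conjI continuous_imp_measurable_on_sets_lebesgue continuous_imp_integrable_real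
      continuous_intros) auto

lemma poly_eq_0_if_AE_lebesgue_on:
  fixes p :: "complex poly"
  assumes "a < b" and zero: "AE x in lebesgue_on {a..b}. poly p (of_real x) = 0"
  shows "p = 0"
proof (rule ccontr)
  assume "p \<noteq> 0"
  let ?Z = "{x::real. poly p (of_real x) = 0}"
  have "finite (complex_of_real -` {z. poly p z = 0})"
    using poly_roots_finite[OF \<open>p \<noteq> 0\<close>] by (rule finite_vimageI) (simp add: inj_on_def)
  then have "?Z \<in> null_sets lebesgue"
    by (intro null_sets_completionI finite_imp_null_set_lborel) (simp add: vimage_def)
  then have "?Z \<inter> {a..b} \<in> null_sets (lebesgue_on {a..b})"
    by (simp add: null_sets_restrict_space null_set_Int2)
  then have "AE x in lebesgue_on {a..b}. x \<notin> ?Z \<inter> {a..b}"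
    by (rule AE_not_in)
  moreover have "AE x in lebesgue_on {a..b}. x \<in> {a..b}"
    by (rule AE_I2) simp
  ultimately have "AE x in lebesgue_on {a..b}. False"
    using zero by eventually_elim auto
  then have "emeasure (lebesgue_on {a..b}) {a..b} = 0"
    by (simp add: eventually_False ae_filter_eq_bot_iff)
  with \<open>a < b\<close> show False
    by (simp add: emeasure_restrict_space)
qed

lemma S_invertible_imp_poly_eq:
  assumes "0 < \<xi>" "S_invertible k \<xi>"
    and "AE x in lebesgue_on {0..\<xi>}.
           Sop k \<xi> (\<lambda>t. poly p (of_real t)) x = Sop k \<xi> (\<lambda>t. poly q (of_real t)) x"
  shows "p = q"
proof -
  have "AE x in lebesgue_on {0..\<xi>}. poly p (of_real x) = poly q (of_real x)"
    using assms L2on_poly[of \<xi>] unfolding S_invertible_def by auto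
  then have "AE x in lebesgue_on {0..\<xi>}. poly (p - q) (of_real x) = 0"
    by eventually_elim simp
  then have "p - q = 0"
    by (rule poly_eq_0_if_AE_lebesgue_on[OF \<open>0 < \<xi>\<close>])
  then show "p = q"
    by simp
qed

lemma h2_eqI:
  assumes "0 < \<xi>" "S_invertible k \<xi>"
    and solves: "AE x in lebesgue_on {0..\<xi>}. Sop k \<xi> (\<lambda>t. poly p (of_real t)) x = 1"
  shows "h2 k \<xi> = poly p (of_real \<xi>)"
  unfolding h2_def
proof (rule the_equality)
  fix c
  assume "\<exists>q. (AE x in lebesgue_on {0..\<xi>}. Sop k \<xi> (\<lambda>t. poly q (of_real t)) x = 1) \<and>
    c = poly q (of_real \<xi>)"
  then obtain q where q: "AE x in lebesgue_on {0..\<xi>}. Sop k \<xi> (\<lambda>t. poly q (of_real t)) x = 1"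
    and c: "c = poly q (of_real \<xi>)"
    by blast
  from q solves have "AE x in lebesgue_on {0..\<xi>}.
      Sop k \<xi> (\<lambda>t. poly q (of_real t)) x = Sop k \<xi> (\<lambda>t. poly p (of_real t)) x"
    by eventually_elim simp
  then have "q = p"
    by (rule S_invertible_imp_poly_eq[OF assms(1,2)])
  with c show "c = poly p (of_real \<xi>)"
    by simp
qed (use solves in blast)

lemma det_S_matrix_nonzero:
  assumes "0 < \<xi>" "S_invertible k \<xi>"
  shows "poly (det (S_matrix k)) (of_real \<xi>) \<noteq> 0"
proof
  let ?N = "Suc (degree k)" and ?E = "map_mat (\<lambda>q. poly q (of_real \<xi>)) (S_matrix k)"
  assume "poly (det (S_matrix k)) (of_real \<xi>) = 0"
  then have "det ?E = 0"
    by (simp add: poly_eval.hom_det)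
  then obtain v where v: "v \<in> carrier_vec ?N" "v \<noteq> 0\<^sub>v ?N" "?E *\<^sub>v v = 0\<^sub>v ?N"
    using det_0_iff_vec_prod_zero_field[of ?E ?N] S_matrix_carrier[of k] by auto
  have "Sop k \<xi> (\<lambda>t. poly (poly_of_vec v) (of_real t)) x =
      Sop k \<xi> (\<lambda>t. poly 0 (of_real t)) x" for x
    using Sop_poly_of_vec[of \<xi> v k x] assms(1) v by (simp add: Sop_def poly_of_vec_eq_0_iff)
  then have "poly_of_vec v = 0"
    using S_invertible_imp_poly_eq[OF assms] by simp
  with v show False
    by (simp add: poly_of_vec_eq_0_iff)
qed

lemma eval_mat_mult_adj_col:
  fixes A :: "'a::field poly mat"
  assumes A: "A \<in> carrier_mat n n" and "j < n" and det: "poly (det A) a \<noteq> 0"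
  shows "map_mat (\<lambda>q. poly q a) A *\<^sub>v
      ((1 / poly (det A) a) \<cdot>\<^sub>v col (map_mat (\<lambda>q. poly q a) (adj_mat A)) j) = unit_vec n j"
proof -
  let ?ev = "\<lambda>q. poly q a" and ?d = "poly (det A) a"
  let ?B = "map_mat ?ev (adj_mat A)"
  have B: "?B \<in> carrier_mat n n"
    using adj_mat(1)[OF A] by simp
  have "map_mat ?ev A * ?B = map_mat ?ev (det A \<cdot>\<^sub>m 1\<^sub>m n)"
    using poly_eval.mat_hom_mult[OF A adj_mat(1)[OF A]] adj_mat(2)[OF A] by simp
  also have "\<dots> = ?d \<cdot>\<^sub>m 1\<^sub>m n"
    by (intro eq_matI) auto
  finally have column: "map_mat ?ev A *\<^sub>v col ?B j = ?d \<cdot>\<^sub>v unit_vec n j"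
    using col_mult2[of "map_mat ?ev A" n n ?B n j] A B \<open>j < n\<close> by (auto intro!: eq_vecI)
  have "map_mat ?ev A *\<^sub>v ((1 / ?d) \<cdot>\<^sub>v col ?B j) =
      (1 / ?d) \<cdot>\<^sub>v (map_mat ?ev A *\<^sub>v col ?B j)"
    using A col_carrier_vec[OF \<open>j < n\<close> B] by (intro mult_mat_vec[of _ n n]) simp_all
  also have "\<dots> = unit_vec n j"
    using det by (simp only: column smult_smult_assoc) simp
  finally show ?thesis .
qed

definition h2_numerator :: "complex poly \<Rightarrow> complex poly" where
  "h2_numerator k = (\<Sum>m<Suc (degree k). adj_mat (S_matrix k) $$ (m, 0) * monom 1 m)"

lemma h2_eq_quotient:
  assumes "0 < \<xi>" "S_invertible k \<xi>"
  shows "h2 k \<xi> = poly (h2_numerator k) (of_real \<xi>) / poly (det (S_matrix k)) (of_real \<xi>)"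
proof -
  let ?N = "Suc (degree k)" and ?M = "S_matrix k" and ?ev = "\<lambda>q. poly q (complex_of_real \<xi>)"
  define v where "v = (1 / ?ev (det ?M)) \<cdot>\<^sub>v col (map_mat ?ev (adj_mat ?M)) 0"
  have v: "v \<in> carrier_vec ?N"
    unfolding v_def carrier_vec_def using adj_mat(1)[OF S_matrix_carrier[of k]] by auto
  have "map_mat ?ev ?M *\<^sub>v v = unit_vec ?N 0"
    unfolding v_def by (rule eval_mat_mult_adj_col[OF S_matrix_carrier _ det_S_matrix_nonzero[OF assms]]) simp
  then have "Sop k \<xi> (\<lambda>t. poly (poly_of_vec v) (of_real t)) x = 1" for x
    unfolding Sop_poly_of_vec[OF less_imp_le[OF assms(1)] v] by (simp add: poly_of_vec_unit_vec_0)
  then have "h2 k \<xi> = poly (poly_of_vec v) (of_real \<xi>)"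
    by (intro h2_eqI[OF assms]) simp
  also have "\<dots> = poly (h2_numerator k) (of_real \<xi>) / ?ev (det ?M)"
    using adj_mat(1)[OF S_matrix_carrier, of k]
    by (simp add: poly_poly_of_vec v_def h2_numerator_def poly_sum poly_monom
        sum_divide_distrib mult_ac del: sum.lessThan_Suc)
  finally show ?thesis .
qed

theorem theorem8p1:
  fixes k :: "complex poly"
  assumes even: "\<forall>x::real. poly k (of_real (- x)) = poly k (of_real x)"
    and real_valued: "\<forall>x::real. cnj (poly k (of_real x)) = poly k (of_real x)"
  shows "(\<exists>P Q :: complex poly. \<forall>\<xi>::real. \<xi> > 0 \<and> S_invertible k \<xi> \<longrightarrow>
            poly Q (of_real \<xi>) \<noteq> 0 \<and> h2 k \<xi> = poly P (of_real \<xi>) / poly Q (of_real \<xi>))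
       \<and> (\<exists>P Q :: complex poly. \<forall>\<xi>::real. \<xi> > 0 \<and> S_invertible k \<xi> \<and> h2 k \<xi> \<noteq> 0 \<longrightarrow>
            poly Q (of_real \<xi>) \<noteq> 0 \<and>
            1 / (2 * (h2 k \<xi>)^2) = poly P (of_real \<xi>) / poly Q (of_real \<xi>))"
proof -
  let ?P = "h2_numerator k" and ?Q = "det (S_matrix k)"
  have h2: "poly ?Q (of_real \<xi>) \<noteq> 0 \<and> h2 k \<xi> = poly ?P (of_real \<xi>) / poly ?Q (of_real \<xi>)"
    if "\<xi> > 0 \<and> S_invertible k \<xi>" for \<xi>
    using that det_S_matrix_nonzero h2_eq_quotient by blast
  have "poly ([:2:] * ?P\<^sup>2) (of_real \<xi>) \<noteq> 0 \<and>
      1 / (2 * (h2 k \<xi>)\<^sup>2) = poly (?Q\<^sup>2) (of_real \<xi>) / poly ([:2:] * ?P\<^sup>2) (of_real \<xi>)"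
    if "\<xi> > 0 \<and> S_invertible k \<xi> \<and> h2 k \<xi> \<noteq> 0" for \<xi>
    using that h2[of \<xi>] by (simp add: power_divide)
  with h2 show ?thesis
    by blast
qed

end
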